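(* Let $\alpha=(\alpha_1,\ldots,\alpha_n)$ be a composition, $\sigma\in S_n$, and $i\in\{1,\ldots,n-1\}$ with $\alpha_i=\alpha_{i+1}$. Then the pair of maps $P_i:\mathrm{NAF}(\alpha,\sigma)\times\mathrm{NAF}(\alpha,\sigma s_i)\to\mathbb{Q}(q,t)$ and $P_i:\mathrm{NAF}(\alpha,\sigma s_i)\times\mathrm{NAF}(\alpha,\sigma)\to\mathbb{Q}(q,t)$ is a probabilistic bijection between $\mathrm{NAF}(\alpha,\sigma)$ and $\mathrm{NAF}(\alpha,\sigma s_i)$ with respect to the weight $\mathrm{wt}_{q,t}$; that is, for all $T\in\mathrm{NAF}(\alpha,\sigma)$ and $U\in\mathrm{NAF}(\alpha,\sigma s_i)$, $$\mathrm{wt}_{q,t}(U)P_i(U,T)=\mathrm{wt}_{q,t}(T)P_i(T,U).$$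
   Context: Permutations are in one-line notation; $\sigma s_i$ is $\sigma$ with the entries in positions $i,i+1$ exchanged (so $(\sigma s_i)s_i=\sigma$). A composition is a sequence of nonnegative integers. The skyline diagram is $\mathrm{dg}(\alpha)=\{(j,r):1\le j\le n,\ 1\le r\le\alpha_j\}$ ($j$ = column, $r$ = row) and the augmented diagram is $\mathrm{adg}(\alpha)=\mathrm{dg}(\alpha)\cup\{(j,0):1\le j\le n\}$ (row $0$ is the basement). For $u=(j,r)\in\mathrm{dg}(\alpha)$: the box south of $u$ is $\mathrm{south}(u)=(j,r-1)$; $\mathrm{leg}(u)=\alpha_j-r$; the left arm set is $\{(j',r-1)\in\mathrm{adg}(\alpha):j'<j,\ \alpha_{j'}<\alpha_j\}$, the right arm set is $\{(j',r)\in\mathrm{dg}(\alpha):j'>j,\ \alpha_{j'}\le\alpha_j\}$, $\mathrm{Arm}(u)$ is their union and $\mathrm{arm}(u)=|\mathrm{Arm}(u)|$. Two boxes of $\mathrm{adg}(\alpha)$ attack each other if they are in the same row, or in consecutive rows with the box in the higher row strictly to the right of the box in the lower row. A filling of shape $\alpha$ and basement $\tau\in S_n$ is a map $T:\mathrm{adg}(\alpha)\to\{1,\ldots,n\}$ with $T(j,0)=\tau_j$; $\mathrm{F}(\alpha,\tau)$ is the set of these, and $\mathrm{NAF}(\alpha,\tau)$ the subset of non-attacking ones (attacking boxes have distinct entries). For integers $a,b$ let $\chi(a,b)=1$ if $a>b$ and $0$ otherwise, and $\chi(a,b,c)=\chi(a,b)+\chi(b,c)-\chi(a,c)$. For $T\in\mathrm{NAF}(\alpha,\tau)$: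 a descent is $u\in\mathrm{dg}(\alpha)$ with $T(u)>T(\mathrm{south}(u))$, and $\mathrm{maj}(T)=\sum_{u\text{ descent}}(\mathrm{leg}(u)+1)$; a triple is $(u,v,w)$ with $u\in\mathrm{dg}(\alpha)$, $w=\mathrm{south}(u)$, $v\in\mathrm{Arm}(u)$; it is an inversion triple if $\chi(T(u),T(v),T(w))=1$ and a coinversion triple otherwise; $\mathrm{coinv}(T)$ is the number of coinversion triples; and $\mathrm{wt}_{q,t}(T)=q^{\mathrm{maj}(T)}t^{\mathrm{coinv}(T)}\prod_{u\in\mathrm{dg}(\alpha),\,T(u)\ne T(\mathrm{south}(u))}\frac{1-t}{1-q^{1+\mathrm{leg}(u)}t^{1+\mathrm{arm}(u)}}$. Fix $i$ with $\alpha_i=\alpha_{i+1}$. For a filling $T$ and $0\le r\le\alpha_i$, $\mathrm{swap}_r(T)$ exchanges the entries of boxes $(i,r)$ and $(i+1,r)$, and $\Omega_{0,h}=\mathrm{swap}_h\circ\cdots\circ\mathrm{swap}_0$. For $T\in\mathrm{NAF}(\alpha,\tau)$ (any $\tau$) and $0\le r\le\alpha_i-1$, let $a=T(i,r)$, $b=T(i+1,r)$, $c=T(i,r+1)$, $d=T(i+1,r+1)$, $A=\mathrm{arm}(i+1,r+1)$, $\ell=\mathrm{leg}(i+1,r+1)$, and define $\rho_r(T)\in\mathbb{Q}(q,t)$: if $a,b,c,d$ are distinct, $\rho_r(T)=0$ when $\chi(c,d,a)=\chi(c,d,b)$ and $\rho_r(T)=1$ when $\chi(c,d,a)=\chi(d,c,b)$;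 if exactly three of them are distinct, then $\rho_r(T)=0$ if $b=c$, $\rho_r(T)=1$ if $b=d$, and $\rho_r(T)=t^{1-\chi(d,a,b)}\frac{1-q^{\ell+1}t^{A+1}}{1-q^{\ell+1}t^{A+2}}$ if $a=c$; if $a=c$ and $b=d$, $\rho_r(T)=1$. Also set $\rho_{\alpha_i}(T)=0$. For $T\in\mathrm{NAF}(\alpha,\tau)$ and a filling $U$ of shape $\alpha$ and basement $\tau s_i$, $P_i(T,U)=\left(\prod_{r=0}^{h-1}\rho_r(T)\right)(1-\rho_h(T))$ if $U=\Omega_{0,h}(T)$ for some $h\in\{0,\ldots,\alpha_i\}$, and $P_i(T,U)=0$ otherwise. This is applied both with $\tau=\sigma$ and with $\tau=\sigma s_i$. A probabilistic bijection between $(\mathbf{T},\mathrm{wt})$ and $(\mathbf{U},\mathrm{wt})$ is a pair $P_{\mathbf{T}}:\mathbf{T}\times\mathbf{U}\to A$, $P_{\mathbf{U}}:\mathbf{U}\times\mathbf{T}\to A$ with $\sum_{U}P_{\mathbf{T}}(T,U)=1$, $\sum_TP_{\mathbf{U}}(U,T)=1$, and $\mathrm{wt}(T)P_{\mathbf{T}}(T,U)=\mathrm{wt}(U)P_{\mathbf{U}}(U,T)$ for all $T,U$. *)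

theory Defs
  imports "HOL-Combinatorics.Permutations" "HOL-Computational_Algebra.Polynomial"
          "HOL-Computational_Algebra.Fraction_Field"
begin

text \<open>Q(q,t) is the fraction field of (Q[q])[t].\<close>
type_synonym qt = "rat poly poly fract"

definition qv :: qt where "qv = Fract [:[:0, 1:]:] 1"
definition tv :: qt where "tv = Fract [:0, 1:] 1"

text \<open>One-line notation: sigma s_i exchanges the entries in positions i, i+1.\<close>
definition perm_si :: "(nat \<Rightarrow> nat) \<Rightarrow> nat \<Rightarrow> nat \<Rightarrow> nat" where
  "perm_si \<sigma> i = (\<lambda>j. if j = i then \<sigma> (i+1) else if j = i+1 then \<sigma> i else \<sigma> j)"

text \<open>A composition of length n is alpha restricted to columns 1..n; boxes are (column,row).\<close>
definition dg :: "nat \<Rightarrow> (nat \<Rightarrow> nat) \<Rightarrow> (nat \<times> nat) set" where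
  "dg n \<alpha> = {(j, r). 1 \<le> j \<and> j \<le> n \<and> 1 \<le> r \<and> r \<le> \<alpha> j}"

definition adg :: "nat \<Rightarrow> (nat \<Rightarrow> nat) \<Rightarrow> (nat \<times> nat) set" where
  "adg n \<alpha> = dg n \<alpha> \<union> {(j, 0) | j. 1 \<le> j \<and> j \<le> n}"

definition south :: "nat \<times> nat \<Rightarrow> nat \<times> nat" where
  "south u = (fst u, snd u - 1)"

definition leg :: "(nat \<Rightarrow> nat) \<Rightarrow> nat \<times> nat \<Rightarrow> nat" where
  "leg \<alpha> u = \<alpha> (fst u) - snd u"

definition Arm :: "nat \<Rightarrow> (nat \<Rightarrow> nat) \<Rightarrow> nat \<times> nat \<Rightarrow> (nat \<times> nat) set" where
  "Arm n \<alpha> u =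
     {(j', r'). (j', r') \<in> adg n \<alpha> \<and> r' = snd u - 1 \<and> j' < fst u \<and> \<alpha> j' < \<alpha> (fst u)}
   \<union> {(j', r'). (j', r') \<in> dg n \<alpha> \<and> r' = snd u \<and> j' > fst u \<and> \<alpha> j' \<le> \<alpha> (fst u)}"

definition arm :: "nat \<Rightarrow> (nat \<Rightarrow> nat) \<Rightarrow> nat \<times> nat \<Rightarrow> nat" where
  "arm n \<alpha> u = card (Arm n \<alpha> u)"

definition attacks :: "nat \<times> nat \<Rightarrow> nat \<times> nat \<Rightarrow> bool" where
  "attacks u v \<longleftrightarrow> u \<noteq> v \<and>
     (snd u = snd v
      \<or> (snd v = snd u + 1 \<and> fst v > fst u)
      \<or> (snd u = snd v + 1 \<and> fst u > fst v))"

text \<open>Fillings are maps on the augmented diagram; they are extended by 0 outside it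
  so that the set of fillings is finite.\<close>
definition fillings :: "nat \<Rightarrow> (nat \<Rightarrow> nat) \<Rightarrow> (nat \<Rightarrow> nat) \<Rightarrow> (nat \<times> nat \<Rightarrow> nat) set" where
  "fillings n \<alpha> \<tau> = {T. (\<forall>u \<in> adg n \<alpha>. T u \<in> {1..n})
                       \<and> (\<forall>j \<in> {1..n}. T (j, 0) = \<tau> j)
                       \<and> (\<forall>u. u \<notin> adg n \<alpha> \<longrightarrow> T u = 0)}"

definition NAF :: "nat \<Rightarrow> (nat \<Rightarrow> nat) \<Rightarrow> (nat \<Rightarrow> nat) \<Rightarrow> (nat \<times> nat \<Rightarrow> nat) set" where
  "NAF n \<alpha> \<tau> = {T \<in> fillings n \<alpha> \<tau>.
      \<forall>u \<in> adg n \<alpha>. \<forall>v \<in> adg n \<alpha>. attacks u v \<longrightarrow> T u \<noteq> T v}"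

definition chi :: "nat \<Rightarrow> nat \<Rightarrow> int" where
  "chi a b = (if a > b then 1 else 0)"

definition chi3 :: "nat \<Rightarrow> nat \<Rightarrow> nat \<Rightarrow> int" where
  "chi3 a b c = chi a b + chi b c - chi a c"

definition descents :: "nat \<Rightarrow> (nat \<Rightarrow> nat) \<Rightarrow> (nat \<times> nat \<Rightarrow> nat) \<Rightarrow> (nat \<times> nat) set" where
  "descents n \<alpha> T = {u \<in> dg n \<alpha>. T u > T (south u)}"

definition maj :: "nat \<Rightarrow> (nat \<Rightarrow> nat) \<Rightarrow> (nat \<times> nat \<Rightarrow> nat) \<Rightarrow> nat" where
  "maj n \<alpha> T = (\<Sum>u \<in> descents n \<alpha> T. leg \<alpha> u + 1)"

text \<open>A triple (u,v,w) has w = south u, so it is determined by (u,v).\<close>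
definition coinv_triples :: "nat \<Rightarrow> (nat \<Rightarrow> nat) \<Rightarrow> (nat \<times> nat \<Rightarrow> nat)
                               \<Rightarrow> ((nat \<times> nat) \<times> (nat \<times> nat)) set" where
  "coinv_triples n \<alpha> T = {(u, v). u \<in> dg n \<alpha> \<and> v \<in> Arm n \<alpha> u
                            \<and> chi3 (T u) (T v) (T (south u)) \<noteq> 1}"

definition coinv :: "nat \<Rightarrow> (nat \<Rightarrow> nat) \<Rightarrow> (nat \<times> nat \<Rightarrow> nat) \<Rightarrow> nat" where
  "coinv n \<alpha> T = card (coinv_triples n \<alpha> T)"

definition wt :: "nat \<Rightarrow> (nat \<Rightarrow> nat) \<Rightarrow> (nat \<times> nat \<Rightarrow> nat) \<Rightarrow> qt" where
  "wt n \<alpha> T = qv ^ maj n \<alpha> T * tv ^ coinv n \<alpha> T *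
     (\<Prod>u \<in> {u \<in> dg n \<alpha>. T u \<noteq> T (south u)}.
        (1 - tv) / (1 - qv ^ (1 + leg \<alpha> u) * tv ^ (1 + arm n \<alpha> u)))"

definition swap_row :: "nat \<Rightarrow> nat \<Rightarrow> (nat \<times> nat \<Rightarrow> nat) \<Rightarrow> (nat \<times> nat \<Rightarrow> nat)" where
  "swap_row i r T = T((i, r) := T (i+1, r), (i+1, r) := T (i, r))"

fun Omega :: "nat \<Rightarrow> nat \<Rightarrow> (nat \<times> nat \<Rightarrow> nat) \<Rightarrow> (nat \<times> nat \<Rightarrow> nat)" where
  "Omega i 0 T = swap_row i 0 T"
| "Omega i (Suc h) T = swap_row i (Suc h) (Omega i h T)"

definition rho :: "nat \<Rightarrow> (nat \<Rightarrow> nat) \<Rightarrow> nat \<Rightarrow> (nat \<times> nat \<Rightarrow> nat) \<Rightarrow> nat \<Rightarrow> qt" where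
  "rho n \<alpha> i T r =
    (if r = \<alpha> i then 0 else
     (let a = T (i, r); b = T (i+1, r); c = T (i, r+1); d = T (i+1, r+1);
          A = arm n \<alpha> (i+1, r+1); l = leg \<alpha> (i+1, r+1) in
      if distinct [a, b, c, d] then
        (if chi3 c d a = chi3 c d b then 0 else if chi3 c d a = chi3 d c b then 1 else 0)
      else if card {a, b, c, d} = 3 then
        (if b = c then 0
         else if b = d then 1
         else if a = c then
           tv powi (1 - chi3 d a b) *
           ((1 - qv ^ (l+1) * tv ^ (A+1)) / (1 - qv ^ (l+1) * tv ^ (A+2)))
         else 0)
      else if a = c \<and> b = d then 1
      else 0))"

definition P_i :: "nat \<Rightarrow> (nat \<Rightarrow> nat) \<Rightarrow> nat \<Rightarrow> (nat \<times> nat \<Rightarrow> nat) \<Rightarrow> (nat \<times> nat \<Rightarrow> nat) \<Rightarrow> qt" where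
  "P_i n \<alpha> i T U =
    (if \<exists>h \<le> \<alpha> i. U = Omega i h T then
       (let h = (THE h. h \<le> \<alpha> i \<and> U = Omega i h T) in
        (\<Prod>r < h. rho n \<alpha> i T r) * (1 - rho n \<alpha> i T h))
     else 0)"

definition prob_bij :: "'t set \<Rightarrow> 'u set \<Rightarrow> ('t \<Rightarrow> 'a::field) \<Rightarrow> ('u \<Rightarrow> 'a)
                         \<Rightarrow> ('t \<Rightarrow> 'u \<Rightarrow> 'a) \<Rightarrow> ('u \<Rightarrow> 't \<Rightarrow> 'a) \<Rightarrow> bool" where
  "prob_bij Ts Us wT wU PT PU \<longleftrightarrow>
     (\<forall>T \<in> Ts. (\<Sum>U \<in> Us. PT T U) = 1)
   \<and> (\<forall>U \<in> Us. (\<Sum>T \<in> Ts. PU U T) = 1)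
   \<and> (\<forall>T \<in> Ts. \<forall>U \<in> Us. wT T * PT T U = wU U * PU U T)"

end

theory Submission
  imports Defs
begin

text \<open>The weight is a product of one factor per box. \<open>Omega i h\<close> permutes the arm of every box
  outside columns \<open>i\<close> and \<open>i+1\<close>, so their factors are unchanged, while the two boxes in row
  \<open>r+1\<close> of these columns contribute a factor that depends only on the entries \<open>a, b, c, d\<close> in
  rows \<open>r\<close> and \<open>r+1\<close> and on the arm of \<open>(i+1, r+1)\<close>, which avoids both columns. Detailed
  balance thus reduces, row by row, to two identities in \<open>\<rat>(q,t)\<close>: for \<open>r < h\<close> both rows
  are swapped and \<open>\<rho>\<^sub>r\<close> balances the change of the pair factor; in the top row \<open>r = h\<close> only
  the lower row is swapped and \<open>1 - \<rho>\<^sub>h\<close> balances it.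

  The probabilities \<open>P\<^sub>i(T, -)\<close> sum to one because the sum over \<open>h\<close> telescopes to
  \<open>1 - \<rho>\<^sub>0 \<cdots> \<rho>\<^bsub>\<alpha> i\<^esub>\<close> and \<open>\<rho>\<close> vanishes in row \<open>\<alpha> i\<close>. Moreover every
  \<open>Omega i h T\<close> of nonzero probability is non-attacking: the only attacks the swap creates, between
  \<open>(i+1, r)\<close> and \<open>(i, r+1)\<close> for \<open>r < h\<close> and between \<open>(i, h)\<close> and \<open>(i+1, h+1)\<close>, are
  excluded by \<open>\<rho>\<^sub>r = 0\<close> when \<open>b = c\<close> and by \<open>\<rho>\<^sub>h = 1\<close> when \<open>b = d\<close>.\<close>

section \<open>Coinversion counts\<close>

lemma chi_antisym: "x \<noteq> y \<Longrightarrow> chi x y + chi y x = 1"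
  unfolding chi_def by auto

lemma chi3_cases: "x \<noteq> y \<Longrightarrow> y \<noteq> z \<Longrightarrow> x \<noteq> z \<Longrightarrow> chi3 x y z = 0 \<or> chi3 x y z = 1"
  unfolding chi3_def chi_def by auto

lemma chi3_swap: "x \<noteq> y \<Longrightarrow> y \<noteq> z \<Longrightarrow> x \<noteq> z \<Longrightarrow> chi3 y x z = 1 - chi3 x y z"
  unfolding chi3_def chi_def by auto

lemma chi3_same_ends: "z \<noteq> a \<Longrightarrow> chi3 a z a = 1"
  unfolding chi3_def chi_def by auto

lemma of_bool_chi3_neq_1:
  "x \<noteq> y \<Longrightarrow> y \<noteq> z \<Longrightarrow> x \<noteq> z \<Longrightarrow> (of_bool (chi3 x y z \<noteq> 1) :: int) = 1 - chi3 x y z"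
  using chi3_cases[of x y z] by auto

definition coinv_count :: "(nat \<times> nat) set \<Rightarrow> (nat \<times> nat \<Rightarrow> nat) \<Rightarrow> nat \<Rightarrow> nat \<Rightarrow> nat" where
  "coinv_count W T x y = card {v \<in> W. chi3 x (T v) y \<noteq> 1}"

lemma coinv_count_same:
  assumes "\<forall>v\<in>W. T v \<noteq> a"
  shows "coinv_count W T a a = 0"
proof -
  have "{v \<in> W. chi3 a (T v) a \<noteq> 1} = {}" using assms chi3_same_ends by auto
  then show ?thesis unfolding coinv_count_def by (simp only: card.empty)
qed

lemma int_coinv_count:
  assumes "finite W" "x \<noteq> y" "\<forall>v\<in>W. T v \<noteq> x \<and> T v \<noteq> y"
  shows "int (coinv_count W T x y) = (\<Sum>v\<in>W. 1 - chi3 x (T v) y)"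
proof -
  have "int (coinv_count W T x y) = (\<Sum>v\<in>W. of_bool (chi3 x (T v) y \<noteq> 1))"
    using assms(1) by (simp add: coinv_count_def Int_def conj_commute)
  also have "\<dots> = (\<Sum>v\<in>W. 1 - chi3 x (T v) y)"
    using assms by (intro sum.cong refl of_bool_chi3_neq_1) auto
  finally show ?thesis .
qed

lemma coinv_count_rotate:
  assumes "finite W" "\<forall>v\<in>W. T v \<notin> {a, b, d}" "distinct [a, b, d]"
  shows "coinv_count W T a b + coinv_count W T d a
       = coinv_count W T d b + (if chi3 d a b = 1 then card W else 0)"
proof -
  have count: "int (coinv_count W T x y) = (\<Sum>v\<in>W. 1 - chi3 x (T v) y)"
    if "x \<in> {a, b, d}" "y \<in> {a, b, d}" "x \<noteq> y" for x y
    using assms that by (intro int_coinv_count) auto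
  have "int (coinv_count W T a b) + int (coinv_count W T d a) - int (coinv_count W T d b)
      = (\<Sum>v\<in>W. (1 - chi3 a (T v) b) + (1 - chi3 d (T v) a) - (1 - chi3 d (T v) b))"
    using assms(3) by (simp add: count sum.distrib sum_subtractf)
  also have "\<dots> = (\<Sum>v\<in>W. chi3 d a b)"
  proof (rule sum.cong)
    fix v assume "v \<in> W"
    then have "chi a (T v) + chi (T v) a = 1" using assms(2) by (intro chi_antisym) auto
    then show "(1 - chi3 a (T v) b) + (1 - chi3 d (T v) a) - (1 - chi3 d (T v) b) = chi3 d a b"
      by (simp add: chi3_def)
  qed simp
  finally show ?thesis
    using chi3_cases[of d a b] assms(3) by auto
qed

lemma coinv_count_exchange:
  assumes "finite W" "\<forall>v\<in>W. T v \<notin> {a, b, c, d}" "distinct [a, b, c, d]"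
    and "chi3 c d a = chi3 c d b"
  shows "coinv_count W T c a + coinv_count W T d b = coinv_count W T c b + coinv_count W T d a"
proof -
  have "int (coinv_count W T c a) + int (coinv_count W T d b)
      = (\<Sum>v\<in>W. (1 - chi3 c (T v) a) + (1 - chi3 d (T v) b))"
    unfolding sum.distrib using assms by (simp add: int_coinv_count)
  also have "\<dots> = (\<Sum>v\<in>W. (1 - chi3 c (T v) b) + (1 - chi3 d (T v) a))"
    using assms(4) by (intro sum.cong) (auto simp: chi3_def)
  also have "\<dots> = int (coinv_count W T c b) + int (coinv_count W T d a)"
    unfolding sum.distrib using assms by (simp add: int_coinv_count)
  finally show ?thesis by linarith
qed

section \<open>Detailed balance for two adjacent boxes\<close>

lemma Fract_power: "Fract (a::'a::idom) 1 ^ k = Fract (a ^ k) 1"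
  by (induct k) (simp_all add: One_fract_def)

lemma qv_power_tv_power: "qv ^ L * tv ^ m = Fract ([:[:0, 1:] ^ L:] * [:0, 1:] ^ m) 1"
  by (simp add: qv_def tv_def Fract_power monom_0 [symmetric] monom_power)

lemma one_minus_qv_tv_neq_0:
  assumes "L \<ge> 1"
  shows "1 - qv ^ L * tv ^ m \<noteq> 0"
proof -
  have "[:[:0, 1:] ^ L:] * [:0, 1:] ^ m \<noteq> (1 :: rat poly poly)"
  proof
    assume one: "[:[:0, 1:] ^ L:] * [:0, 1:] ^ m = (1 :: rat poly poly)"
    have "degree ([:[:0, 1:] ^ L:] * [:0, 1:] ^ m :: rat poly poly) = m"
      by (simp add: degree_mult_eq degree_power_eq)
    with one have "m = 0" by simp
    with one have "degree ([:0, 1:] ^ L :: rat poly) = 0" by (simp add: one_pCons)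
    then show False using assms by (simp add: degree_power_eq)
  qed
  then show ?thesis by (simp add: qv_power_tv_power One_fract_def Zero_fract_def eq_fract)
qed

definition hook_factor :: "bool \<Rightarrow> nat \<Rightarrow> nat \<Rightarrow> qt" where
  "hook_factor p L m = (if p then (1 - tv) / (1 - qv ^ L * tv ^ m) else 1)"

text \<open>The weight of the two boxes \<open>(i, r+1)\<close> and \<open>(i+1, r+1)\<close> with entries \<open>c, d\<close> above
  \<open>a, b\<close>, where \<open>L\<close> is the leg plus one and \<open>A\<close> the arm of \<open>(i+1, r+1)\<close>, and \<open>K x y\<close>
  counts the coinversions against that arm. The arm of \<open>(i, r+1)\<close> consists of the same boxes
  and \<open>(i+1, r+1)\<close> itself, which yields the triple \<open>(c, d, a)\<close> and the exponent \<open>A + 2\<close>.\<close>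
definition pair_wt :: "nat \<Rightarrow> nat \<Rightarrow> (nat \<Rightarrow> nat \<Rightarrow> nat) \<Rightarrow> nat \<Rightarrow> nat \<Rightarrow> nat \<Rightarrow> nat \<Rightarrow> qt" where
  "pair_wt L A K a b c d =
     qv ^ ((if c > a then L else 0) + (if d > b then L else 0))
     * tv ^ ((if chi3 c d a \<noteq> 1 then 1 else 0) + K c a + K d b)
     * hook_factor (c \<noteq> a) L (A + 2) * hook_factor (d \<noteq> b) L (A + 1)"

definition rho_local :: "nat \<Rightarrow> nat \<Rightarrow> nat \<Rightarrow> nat \<Rightarrow> nat \<Rightarrow> nat \<Rightarrow> qt" where
  "rho_local A L a b c d =
      (if distinct [a, b, c, d] then
        (if chi3 c d a = chi3 c d b then 0 else if chi3 c d a = chi3 d c b then 1 else 0)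
      else if card {a, b, c, d} = 3 then
        (if b = c then 0
         else if b = d then 1
         else if a = c then
           tv powi (1 - chi3 d a b) * ((1 - qv ^ L * tv ^ (A + 1)) / (1 - qv ^ L * tv ^ (A + 2)))
         else 0)
      else if a = c \<and> b = d then 1
      else 0)"

lemma rho_local_b_eq_c: "a \<noteq> b \<Longrightarrow> c \<noteq> d \<Longrightarrow> a \<noteq> d \<Longrightarrow> b = c \<Longrightarrow> rho_local A L a b c d = 0"
  unfolding rho_local_def by (auto simp: insert_commute)

lemma rho_local_b_eq_d: "a \<noteq> b \<Longrightarrow> c \<noteq> d \<Longrightarrow> a \<noteq> d \<Longrightarrow> b = d \<Longrightarrow> rho_local A L a b c d = 1"
  unfolding rho_local_def by (cases "a = c") (auto simp: insert_commute)

lemma rho_local_a_eq_c: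
  "a \<noteq> b \<Longrightarrow> a \<noteq> d \<Longrightarrow> b \<noteq> d \<Longrightarrow> rho_local A L a b a d
     = tv powi (1 - chi3 d a b) * ((1 - qv ^ L * tv ^ (A + 1)) / (1 - qv ^ L * tv ^ (A + 2)))"
  unfolding rho_local_def by (auto simp: insert_commute)

lemma detailed_balance_swapped_row_repeat:
  assumes "finite W" "\<forall>v\<in>W. T v \<notin> {a, b, d}" "L \<ge> 1" "distinct [a, b, d]"
  shows "pair_wt L (card W) (coinv_count W T) a b a d * rho_local (card W) L a b a d
       = pair_wt L (card W) (coinv_count W T) b a d a * rho_local (card W) L b a d a"
proof -
  define A K where "A = card W" and "K = coinv_count W T"
  define X where "X = (if d > b then L else 0)"
  define N1 N2 where "N1 = 1 - qv ^ L * tv ^ (A + 1)" and "N2 = 1 - qv ^ L * tv ^ (A + 2)"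
  have "N1 \<noteq> 0" unfolding N1_def using assms(3) by (rule one_minus_qv_tv_neq_0)
  have K_aa: "K a a = 0" unfolding K_def using assms(2) by (intro coinv_count_same) auto
  have "chi3 a d a = 1" using assms(4) by (intro chi3_same_ends) auto
  then have wt_T: "pair_wt L A K a b a d = qv ^ X * tv ^ K d b * ((1 - tv) / N1)"
    using assms(4) K_aa unfolding pair_wt_def hook_factor_def X_def N1_def by auto
  have wt_U: "pair_wt L A K b a d a
      = qv ^ X * tv ^ ((if chi3 d a b \<noteq> 1 then 1 else 0) + K d b) * ((1 - tv) / N2)"
    using assms(4) K_aa unfolding pair_wt_def hook_factor_def X_def N2_def by auto
  have rho_T: "rho_local A L a b a d = tv powi (1 - chi3 d a b) * (N1 / N2)"
    unfolding N1_def N2_def using assms(4) by (intro rho_local_a_eq_c) auto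
  have rho_U: "rho_local A L b a d a = 1"
    using assms(4) by (intro rho_local_b_eq_d) auto
  have "pair_wt L A K a b a d * rho_local A L a b a d = pair_wt L A K b a d a * rho_local A L b a d a"
  proof (cases "chi3 d a b = 1")
    case True
    then show ?thesis unfolding wt_T wt_U rho_T rho_U using \<open>N1 \<noteq> 0\<close> by simp
  next
    case False
    then have "chi3 d a b = 0" using chi3_cases[of d a b] assms(4) by auto
    then show ?thesis unfolding wt_T wt_U rho_T rho_U using \<open>N1 \<noteq> 0\<close> by (simp add: mult_ac)
  qed
  then show ?thesis unfolding A_def K_def .
qed

lemma detailed_balance_swapped_row:
  assumes "finite W" "\<forall>v\<in>W. T v \<notin> {a, b, c, d}" "L \<ge> 1"
    and "a \<noteq> b" "c \<noteq> d" "a \<noteq> d" "b \<noteq> c"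
  shows "pair_wt L (card W) (coinv_count W T) a b c d * rho_local (card W) L a b c d
       = pair_wt L (card W) (coinv_count W T) b a d c * rho_local (card W) L b a d c"
proof -
  consider "distinct [a, b, c, d]" | "a = c" "b \<noteq> d" | "a \<noteq> c" "b = d" | "a = c" "b = d"
    using assms(4-7) by auto
  then show ?thesis
  proof cases
    case 1
    then have swap: "chi3 d c b = 1 - chi3 c d b" "chi3 d c a = 1 - chi3 c d a"
      by (auto intro!: chi3_swap)
    show ?thesis
    proof (cases "chi3 c d a = chi3 c d b")
      case True
      then show ?thesis using 1 swap unfolding rho_local_def by simp
    next
      case False
      then have "chi3 d c b = chi3 c d a"
        using swap chi3_cases[of c d a] chi3_cases[of c d b] 1 by auto
      then show ?thesis
        using False 1 swap unfolding rho_local_def pair_wt_def hook_factor_def by (simp add: ac_simps)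
    qed
  next
    case 2
    then show ?thesis using detailed_balance_swapped_row_repeat[of W T a b d L] assms by auto
  next
    case 3
    then show ?thesis using detailed_balance_swapped_row_repeat[of W T b a c L] assms by auto
  next
    case 4
    then have "coinv_count W T a a = 0" "coinv_count W T b b = 0"
      using assms(2) by (auto intro!: coinv_count_same)
    moreover have "chi3 a b a = 1" "chi3 b a b = 1" using assms(4) by (auto intro!: chi3_same_ends)
    moreover have "rho_local (card W) L a b c d = 1" "rho_local (card W) L b a d c = 1"
      using 4 assms(4) by (auto intro!: rho_local_b_eq_d)
    ultimately show ?thesis using 4 unfolding pair_wt_def hook_factor_def by simp
  qed
qed

lemma detailed_balance_top_row_repeat:
  assumes "finite W" "\<forall>v\<in>W. T v \<notin> {a, b, d}" "L \<ge> 1" "distinct [a, b, d]"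
  shows "pair_wt L (card W) (coinv_count W T) a b a d * (1 - rho_local (card W) L a b a d)
       = pair_wt L (card W) (coinv_count W T) b a a d * (1 - rho_local (card W) L b a a d)"
proof -
  define A K where "A = card W" and "K = coinv_count W T"
  define X where "X = (if d > b then L else 0)"
  define N1 N2 where "N1 = 1 - qv ^ L * tv ^ (A + 1)" and "N2 = 1 - qv ^ L * tv ^ (A + 2)"
  define F1 F2 where "F1 = (1 - tv) / N1" and "F2 = (1 - tv) / N2"
  have "N2 \<noteq> 0" unfolding N2_def using assms(3) by (rule one_minus_qv_tv_neq_0)
  have K_aa: "K a a = 0" unfolding K_def using assms(2) by (intro coinv_count_same) auto
  have K_rotate: "K a b + K d a = K d b + (if chi3 d a b = 1 then A else 0)"
    unfolding K_def A_def using assms by (intro coinv_count_rotate) auto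
  have q_rotate: "(if a > b then L else 0) + (if d > a then L else 0)
      = X + (if chi3 d a b = 1 then L else 0)"
    using assms(4) unfolding X_def chi3_def chi_def by auto
  have swap: "chi3 a d b = 1 - chi3 d a b" using assms(4) by (intro chi3_swap) auto
  have "chi3 a d a = 1" using assms(4) by (intro chi3_same_ends) auto
  then have wt_T: "pair_wt L A K a b a d = qv ^ X * tv ^ K d b * F1"
    using assms(4) K_aa unfolding pair_wt_def hook_factor_def X_def F1_def N1_def by auto
  have wt_U: "pair_wt L A K b a a d
      = qv ^ ((if a > b then L else 0) + (if d > a then L else 0))
        * tv ^ ((if chi3 a d b \<noteq> 1 then 1 else 0) + (K a b + K d a)) * F2 * F1"
    using assms(4) unfolding pair_wt_def hook_factor_def F1_def F2_def N1_def N2_def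
    by (simp add: ac_simps)
  have rho_T: "rho_local A L a b a d = tv powi (1 - chi3 d a b) * (N1 / N2)"
    unfolding N1_def N2_def using assms(4) by (intro rho_local_a_eq_c) auto
  have rho_U: "rho_local A L b a a d = 0"
    using assms(4) by (intro rho_local_b_eq_c) auto
  have "pair_wt L A K a b a d * (1 - rho_local A L a b a d)
      = pair_wt L A K b a a d * (1 - rho_local A L b a a d)"
  proof (cases "chi3 d a b = 1")
    case True
    have "1 - N1 / N2 = qv ^ L * tv ^ (A + 1) * F2"
      using \<open>N2 \<noteq> 0\<close> unfolding F2_def N1_def N2_def by (simp add: field_simps)
    then have "pair_wt L A K a b a d * (1 - rho_local A L a b a d)
        = qv ^ (X + L) * tv ^ (1 + (K d b + A)) * F2 * F1"
      unfolding wt_T rho_T using True by (simp add: power_add mult_ac)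
    also have "\<dots> = pair_wt L A K b a a d * (1 - rho_local A L b a a d)"
      unfolding wt_U rho_U q_rotate K_rotate swap using True by simp
    finally show ?thesis .
  next
    case False
    then have "chi3 d a b = 0" using chi3_cases[of d a b] assms(4) by auto
    moreover have "1 - tv * (N1 / N2) = F2"
      using \<open>N2 \<noteq> 0\<close> unfolding F2_def N1_def N2_def by (simp add: field_simps)
    ultimately show ?thesis
      unfolding wt_T wt_U rho_T rho_U q_rotate K_rotate swap by (simp add: mult_ac)
  qed
  then show ?thesis unfolding A_def K_def .
qed

lemma detailed_balance_top_row:
  assumes "finite W" "\<forall>v\<in>W. T v \<notin> {a, b, c, d}" "L \<ge> 1"
    and "a \<noteq> b" "c \<noteq> d" "a \<noteq> d" "b \<noteq> d"
  shows "pair_wt L (card W) (coinv_count W T) a b c d * (1 - rho_local (card W) L a b c d)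
       = pair_wt L (card W) (coinv_count W T) b a c d * (1 - rho_local (card W) L b a c d)"
proof -
  consider "distinct [a, b, c, d]" | "a = c" | "b = c"
    using assms(4-7) by auto
  then show ?thesis
  proof cases
    case 1
    then have swap: "chi3 d c b = 1 - chi3 c d b" "chi3 d c a = 1 - chi3 c d a"
      by (auto intro!: chi3_swap)
    show ?thesis
    proof (cases "chi3 c d a = chi3 c d b")
      case True
      have "coinv_count W T c a + coinv_count W T d b = coinv_count W T c b + coinv_count W T d a"
        using assms(1,2) 1 True by (rule coinv_count_exchange)
      moreover have "(if c > a then L else 0) + (if d > b then L else 0)
          = (if c > b then L else 0) + (if d > a then L else 0)"
        using True unfolding chi3_def chi_def by (auto split: if_splits)
      ultimately show ?thesis
        using True 1 unfolding rho_local_def pair_wt_def hook_factor_def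
        by (simp add: add.assoc[symmetric])
    next
      case False
      then have "chi3 d c b = chi3 c d a" "chi3 d c a = chi3 c d b"
        using swap chi3_cases[of c d a] chi3_cases[of c d b] 1 by auto
      then show ?thesis using False 1 unfolding rho_local_def by auto
    qed
  next
    case 2
    then show ?thesis using detailed_balance_top_row_repeat[of W T a b d L] assms by auto
  next
    case 3
    then show ?thesis using detailed_balance_top_row_repeat[of W T b a d L] assms by auto
  qed
qed

lemma cell_in_adg: "1 \<le> j \<Longrightarrow> j \<le> n \<Longrightarrow> r \<le> \<alpha> j \<Longrightarrow> (j, r) \<in> adg n \<alpha>"
  by (cases r) (auto simp: adg_def dg_def)

lemma finite_dg: "finite (dg n \<alpha>)"
proof -
  have "dg n \<alpha> = Sigma {1..n} (\<lambda>j. {1..\<alpha> j})" by (auto simp: dg_def)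
  then show ?thesis by simp
qed

lemma finite_adg: "finite (adg n \<alpha>)"
proof -
  have "{(j, 0) | j. 1 \<le> j \<and> j \<le> n} = (\<lambda>j. (j, 0::nat)) ` {1..n}" by auto
  then show ?thesis unfolding adg_def using finite_dg by simp
qed

lemma Arm_subset_adg: "Arm n \<alpha> u \<subseteq> adg n \<alpha>"
  by (auto simp: Arm_def adg_def)

lemma finite_Arm: "finite (Arm n \<alpha> u)"
  using finite_subset[OF Arm_subset_adg finite_adg] .

definition swap_cell :: "nat \<Rightarrow> nat \<Rightarrow> nat \<times> nat \<Rightarrow> nat \<times> nat" where
  "swap_cell i h u =
     (if snd u \<le> h then (if fst u = i then (i+1, snd u) else if fst u = i+1 then (i, snd u) else u)
      else u)"

lemma Omega_eq_comp_swap_cell: "Omega i h T = T \<circ> swap_cell i h"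
  by (induct h) (auto simp: swap_row_def swap_cell_def fun_eq_iff)

lemma Omega_apply: "Omega i h T u = T (swap_cell i h u)"
  by (simp add: Omega_eq_comp_swap_cell)

lemma swap_cell_swap_cell [simp]: "swap_cell i h (swap_cell i h u) = u"
  by (cases u) (auto simp: swap_cell_def)

lemma Omega_Omega [simp]: "Omega i h (Omega i h T) = T"
  by (simp add: Omega_eq_comp_swap_cell fun_eq_iff)

lemma swap_cell_in_adg_iff:
  assumes "1 \<le> i" "i+1 \<le> n" "\<alpha> i = \<alpha> (i+1)"
  shows "swap_cell i h u \<in> adg n \<alpha> \<longleftrightarrow> u \<in> adg n \<alpha>"
  using assms by (cases u) (auto simp: swap_cell_def adg_def dg_def)

lemma swap_cell_image_Arm:
  assumes "1 \<le> i" "i+1 \<le> n" "\<alpha> i = \<alpha> (i+1)" "fst u \<notin> {i, i+1}"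
  shows "swap_cell i h ` Arm n \<alpha> u = Arm n \<alpha> u"
proof -
  have into: "swap_cell i h v \<in> Arm n \<alpha> u" if "v \<in> Arm n \<alpha> u" for v
    using assms that unfolding Arm_def adg_def dg_def swap_cell_def
    by (cases u; cases v) (auto split: if_splits)
  show ?thesis
  proof
    show "swap_cell i h ` Arm n \<alpha> u \<subseteq> Arm n \<alpha> u" using into by blast
    show "Arm n \<alpha> u \<subseteq> swap_cell i h ` Arm n \<alpha> u"
      using into by (metis image_eqI subsetI swap_cell_swap_cell)
  qed
qed

lemma Arm_left_column:
  assumes "1 \<le> i" "i+1 \<le> n" "\<alpha> i = \<alpha> (i+1)" "r < \<alpha> i"
  shows "Arm n \<alpha> (i, Suc r) = insert (i+1, Suc r) (Arm n \<alpha> (i+1, Suc r))"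
  using assms unfolding Arm_def adg_def dg_def by (auto simp: less_Suc_eq)

lemma Arm_right_column_outside:
  assumes "\<alpha> i = \<alpha> (i+1)" "v \<in> Arm n \<alpha> (i+1, R)"
  shows "fst v \<notin> {i, i+1}"
  using assms unfolding Arm_def by auto

lemma Arm_right_column_attacks:
  assumes "\<alpha> i = \<alpha> (i+1)" "v \<in> Arm n \<alpha> (i+1, Suc r)"
  shows "attacks v (i, r)" "attacks v (i+1, r)" "attacks v (i, Suc r)" "attacks v (i+1, Suc r)"
  using assms unfolding Arm_def attacks_def by (auto simp: less_Suc_eq)

lemma card_filter_permute:
  assumes "inj_on g S" "g ` S = S"
  shows "card {v \<in> S. P (g v)} = card {v \<in> S. P v}"
proof -
  have "g ` {v \<in> S. P (g v)} = {v \<in> S. P v}"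
  proof
    show "g ` {v \<in> S. P (g v)} \<subseteq> {v \<in> S. P v}" using assms(2) by auto
    show "{v \<in> S. P v} \<subseteq> g ` {v \<in> S. P (g v)}"
    proof
      fix w assume w: "w \<in> {v \<in> S. P v}"
      then obtain x where "x \<in> S" "w = g x" using assms(2) by auto
      then show "w \<in> g ` {v \<in> S. P (g v)}" using w by auto
    qed
  qed
  moreover have "inj_on g {v \<in> S. P (g v)}" using assms(1) by (rule inj_on_subset) auto
  ultimately show ?thesis by (metis card_image)
qed

section \<open>Factorisation of the weight\<close>

definition box_wt :: "nat \<Rightarrow> (nat \<Rightarrow> nat) \<Rightarrow> (nat \<times> nat \<Rightarrow> nat) \<Rightarrow> nat \<times> nat \<Rightarrow> qt" where
  "box_wt n \<alpha> T u =
     qv ^ (if T u > T (south u) then leg \<alpha> u + 1 else 0)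
     * tv ^ card {v \<in> Arm n \<alpha> u. chi3 (T u) (T v) (T (south u)) \<noteq> 1}
     * hook_factor (T u \<noteq> T (south u)) (1 + leg \<alpha> u) (1 + arm n \<alpha> u)"

lemma wt_eq_prod_box_wt: "wt n \<alpha> T = (\<Prod>u\<in>dg n \<alpha>. box_wt n \<alpha> T u)"
proof -
  have maj: "maj n \<alpha> T = (\<Sum>u\<in>dg n \<alpha>. if T u > T (south u) then leg \<alpha> u + 1 else 0)"
    unfolding maj_def descents_def using finite_dg by (rule sum.inter_filter)
  have "coinv_triples n \<alpha> T
      = Sigma (dg n \<alpha>) (\<lambda>u. {v \<in> Arm n \<alpha> u. chi3 (T u) (T v) (T (south u)) \<noteq> 1})"
    unfolding coinv_triples_def by auto
  then have coinv: "coinv n \<alpha> T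
      = (\<Sum>u\<in>dg n \<alpha>. card {v \<in> Arm n \<alpha> u. chi3 (T u) (T v) (T (south u)) \<noteq> 1})"
    unfolding coinv_def using finite_dg finite_Arm by (simp add: card_SigmaI)
  have hooks: "(\<Prod>u \<in> {u \<in> dg n \<alpha>. T u \<noteq> T (south u)}.
        (1 - tv) / (1 - qv ^ (1 + leg \<alpha> u) * tv ^ (1 + arm n \<alpha> u)))
      = (\<Prod>u\<in>dg n \<alpha>. hook_factor (T u \<noteq> T (south u)) (1 + leg \<alpha> u) (1 + arm n \<alpha> u))"
    unfolding hook_factor_def using finite_dg by (rule prod.inter_filter)
  show ?thesis unfolding wt_def maj coinv hooks box_wt_def power_sum prod.distrib ..
qed

lemma wt_split_columns:
  assumes "1 \<le> i" "i+1 \<le> n" "\<alpha> i = \<alpha> (i+1)"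
  shows "wt n \<alpha> T = (\<Prod>u \<in> {u \<in> dg n \<alpha>. fst u \<notin> {i, i+1}}. box_wt n \<alpha> T u)
           * (\<Prod>r<\<alpha> i. box_wt n \<alpha> T (i, Suc r) * box_wt n \<alpha> T (i+1, Suc r))"
proof -
  define outside where "outside = {u \<in> dg n \<alpha>. fst u \<notin> {i, i+1}}"
  define column where "column j = (\<lambda>r. (j, Suc r)) ` {..<\<alpha> i}" for j :: nat
  have column_eq: "column j = {u \<in> dg n \<alpha>. fst u = j}" if "j \<in> {i, i+1}" for j
  proof
    show "column j \<subseteq> {u \<in> dg n \<alpha>. fst u = j}"
      unfolding column_def dg_def using assms that by auto
    show "{u \<in> dg n \<alpha>. fst u = j} \<subseteq> column j"
    proof
      fix u assume "u \<in> {u \<in> dg n \<alpha>. fst u = j}"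
      then show "u \<in> column j"
        unfolding column_def dg_def using assms that by (intro image_eqI[where x = "snd u - 1"]) auto
    qed
  qed
  have dg_split: "dg n \<alpha> = outside \<union> (column i \<union> column (i+1))"
    unfolding outside_def using column_eq by auto
  have finite: "finite outside" "finite (column j)" for j
    unfolding outside_def column_def using finite_dg by auto
  have disjoint: "outside \<inter> (column i \<union> column (i+1)) = {}" "column i \<inter> column (i+1) = {}"
    unfolding outside_def column_def by auto
  have column_prod: "(\<Prod>u\<in>column j. box_wt n \<alpha> T u) = (\<Prod>r<\<alpha> i. box_wt n \<alpha> T (j, Suc r))" for j
    unfolding column_def by (subst prod.reindex) (auto simp: inj_on_def)
  show ?thesis
    unfolding outside_def[symmetric] unfolding wt_eq_prod_box_wt dg_split
      prod.union_disjoint[OF finite(1) finite_UnI[OF finite(2,2)] disjoint(1)]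
      prod.union_disjoint[OF finite(2,2) disjoint(2)] column_prod prod.distrib ..
qed

lemma box_wt_pair:
  assumes "1 \<le> i" "i+1 \<le> n" "\<alpha> i = \<alpha> (i+1)" "r < \<alpha> i"
  shows "box_wt n \<alpha> T (i, Suc r) * box_wt n \<alpha> T (i+1, Suc r)
    = pair_wt (leg \<alpha> (i+1, Suc r) + 1) (card (Arm n \<alpha> (i+1, Suc r)))
        (coinv_count (Arm n \<alpha> (i+1, Suc r)) T)
        (T (i, r)) (T (i+1, r)) (T (i, Suc r)) (T (i+1, Suc r))"
proof -
  define W where "W = Arm n \<alpha> (i+1, Suc r)"
  have "(i+1, Suc r) \<notin> W" unfolding W_def Arm_def by auto
  have "finite W" unfolding W_def by (rule finite_Arm)
  have Arm_left: "Arm n \<alpha> (i, Suc r) = insert (i+1, Suc r) W"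
    unfolding W_def using assms by (rule Arm_left_column)
  have arm_left: "arm n \<alpha> (i, Suc r) = card W + 1"
    unfolding arm_def Arm_left using \<open>finite W\<close> \<open>(i+1, Suc r) \<notin> W\<close> by simp
  have leg_left: "leg \<alpha> (i, Suc r) = leg \<alpha> (i+1, Suc r)" unfolding leg_def using assms by simp
  have count: "card {v \<in> insert (i+1, Suc r) W. P v} = (if P (i+1, Suc r) then 1 else 0) + card {v \<in> W. P v}"
    for P
  proof -
    have "{v \<in> insert (i+1, Suc r) W. P v}
        = (if P (i+1, Suc r) then insert (i+1, Suc r) {v \<in> W. P v} else {v \<in> W. P v})"
      by auto
    then show ?thesis using \<open>finite W\<close> \<open>(i+1, Suc r) \<notin> W\<close> by simp
  qed
  show ?thesis
    unfolding box_wt_def pair_wt_def coinv_count_def south_def Arm_left arm_left leg_left count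
      W_def[symmetric] arm_def[of n \<alpha> "(i+1, Suc r)"]
    by (simp add: power_add ac_simps)
qed

lemma box_wt_Omega_outside:
  assumes "1 \<le> i" "i+1 \<le> n" "\<alpha> i = \<alpha> (i+1)" "fst u \<notin> {i, i+1}"
  shows "box_wt n \<alpha> (Omega i h T) u = box_wt n \<alpha> T u"
proof -
  have fixed: "swap_cell i h u = u" "swap_cell i h (south u) = south u"
    using assms(4) unfolding swap_cell_def south_def by auto
  have "inj_on (swap_cell i h) (Arm n \<alpha> u)"
    by (rule inj_on_inverseI[where g = "swap_cell i h"]) simp
  then have "card {v \<in> Arm n \<alpha> u. chi3 (T u) (T (swap_cell i h v)) (T (south u)) \<noteq> 1}
      = card {v \<in> Arm n \<alpha> u. chi3 (T u) (T v) (T (south u)) \<noteq> 1}"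
    using swap_cell_image_Arm[OF assms] by (rule card_filter_permute)
  then show ?thesis unfolding box_wt_def Omega_apply fixed by simp
qed

lemma coinv_count_Omega_right_arm:
  assumes "\<alpha> i = \<alpha> (i+1)"
  shows "coinv_count (Arm n \<alpha> (i+1, R)) (Omega i h T) = coinv_count (Arm n \<alpha> (i+1, R)) T"
proof -
  have "swap_cell i h v = v" if "v \<in> Arm n \<alpha> (i+1, R)" for v
    using Arm_right_column_outside[OF assms that] unfolding swap_cell_def by auto
  then show ?thesis unfolding coinv_count_def Omega_apply by (intro ext arg_cong[where f = card]) auto
qed

lemma rho_eq_rho_local:
  assumes "r < \<alpha> i"
  shows "rho n \<alpha> i T r = rho_local (card (Arm n \<alpha> (i+1, Suc r))) (leg \<alpha> (i+1, Suc r) + 1)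
           (T (i, r)) (T (i+1, r)) (T (i, Suc r)) (T (i+1, Suc r))"
  using assms unfolding rho_def rho_local_def Let_def arm_def by simp

lemma rho_top: "rho n \<alpha> i T (\<alpha> i) = 0"
  unfolding rho_def by simp

lemma NAF_neq:
  "T \<in> NAF n \<alpha> \<tau> \<Longrightarrow> u \<in> adg n \<alpha> \<Longrightarrow> v \<in> adg n \<alpha> \<Longrightarrow> attacks u v \<Longrightarrow> T u \<noteq> T v"
  unfolding NAF_def by auto

lemma NAF_column_pair_neq:
  assumes "1 \<le> i" "i+1 \<le> n" "\<alpha> i = \<alpha> (i+1)" "T \<in> NAF n \<alpha> \<tau>" "r < \<alpha> i"
  shows "T (i, r) \<noteq> T (i+1, r)" "T (i, Suc r) \<noteq> T (i+1, Suc r)" "T (i, r) \<noteq> T (i+1, Suc r)"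
proof -
  have adg: "(i, r) \<in> adg n \<alpha>" "(i+1, r) \<in> adg n \<alpha>" "(i, Suc r) \<in> adg n \<alpha>" "(i+1, Suc r) \<in> adg n \<alpha>"
    using assms(1-3,5) by (auto intro!: cell_in_adg)
  show "T (i, r) \<noteq> T (i+1, r)" by (rule NAF_neq[OF assms(4) adg(1,2)]) (simp add: attacks_def)
  show "T (i, Suc r) \<noteq> T (i+1, Suc r)" by (rule NAF_neq[OF assms(4) adg(3,4)]) (simp add: attacks_def)
  show "T (i, r) \<noteq> T (i+1, Suc r)" by (rule NAF_neq[OF assms(4) adg(1,4)]) (simp add: attacks_def)
qed

lemma NAF_right_arm_values:
  assumes "1 \<le> i" "i+1 \<le> n" "\<alpha> i = \<alpha> (i+1)" "T \<in> NAF n \<alpha> \<tau>" "r < \<alpha> i"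
    and "v \<in> Arm n \<alpha> (i+1, Suc r)"
  shows "T v \<notin> {T (i, r), T (i+1, r), T (i, Suc r), T (i+1, Suc r)}"
proof -
  have "v \<in> adg n \<alpha>" using assms(6) Arm_subset_adg by blast
  moreover have "(i, r) \<in> adg n \<alpha>" "(i+1, r) \<in> adg n \<alpha>" "(i, Suc r) \<in> adg n \<alpha>" "(i+1, Suc r) \<in> adg n \<alpha>"
    using assms(1-3,5) by (auto intro!: cell_in_adg)
  ultimately show ?thesis
    using NAF_neq[OF assms(4)] Arm_right_column_attacks[OF assms(3,6)] by auto
qed

definition rho_factor ::
    "nat \<Rightarrow> (nat \<Rightarrow> nat) \<Rightarrow> nat \<Rightarrow> nat \<Rightarrow> (nat \<times> nat \<Rightarrow> nat) \<Rightarrow> nat \<Rightarrow> qt" where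
  "rho_factor n \<alpha> i h T r =
     (if r < h then rho n \<alpha> i T r else if r = h then 1 - rho n \<alpha> i T h else 1)"

lemma prod_rho_factor:
  assumes "h \<le> \<alpha> i"
  shows "(\<Prod>r<h. rho n \<alpha> i T r) * (1 - rho n \<alpha> i T h) = (\<Prod>r<\<alpha> i. rho_factor n \<alpha> i h T r)"
proof -
  have below_h: "(\<Prod>r<h. rho_factor n \<alpha> i h T r) = (\<Prod>r<h. rho n \<alpha> i T r)"
    by (rule prod.cong) (auto simp: rho_factor_def)
  show ?thesis
  proof (cases "h = \<alpha> i")
    case True
    then show ?thesis using below_h by (simp add: rho_top)
  next
    case False
    have "(\<Prod>r<\<alpha> i. rho_factor n \<alpha> i h T r) = (\<Prod>r<Suc h. rho_factor n \<alpha> i h T r)"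
      using assms False by (intro prod.mono_neutral_right) (auto simp: rho_factor_def)
    then show ?thesis using below_h by (simp add: rho_factor_def)
  qed
qed

lemma detailed_balance_column_pair:
  assumes cols: "1 \<le> i" "i+1 \<le> n" "\<alpha> i = \<alpha> (i+1)" and T: "T \<in> NAF n \<alpha> \<tau>"
    and U: "Omega i h T \<in> NAF n \<alpha> \<tau>'" and r: "r < \<alpha> i"
  shows "box_wt n \<alpha> T (i, Suc r) * box_wt n \<alpha> T (i+1, Suc r) * rho_factor n \<alpha> i h T r
    = box_wt n \<alpha> (Omega i h T) (i, Suc r) * box_wt n \<alpha> (Omega i h T) (i+1, Suc r)
      * rho_factor n \<alpha> i h (Omega i h T) r"
proof -
  define U where "U = Omega i h T"
  define a b c d where "a = T (i, r)" and "b = T (i+1, r)" and "c = T (i, Suc r)" and "d = T (i+1, Suc r)"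
  define W L where "W = Arm n \<alpha> (i+1, Suc r)" and "L = leg \<alpha> (i+1, Suc r) + 1"
  have "finite W" unfolding W_def by (rule finite_Arm)
  have arm_values: "\<forall>v\<in>W. T v \<notin> {a, b, c, d}"
    unfolding W_def a_def b_def c_def d_def using NAF_right_arm_values[OF cols T r] by blast
  have "a \<noteq> b" "c \<noteq> d" "a \<noteq> d"
    unfolding a_def b_def c_def d_def using NAF_column_pair_neq[OF cols T r] by auto
  have "U (i, r) \<noteq> U (i+1, Suc r)"
    unfolding U_def using NAF_column_pair_neq[OF cols U r] by auto
  have wt_T: "box_wt n \<alpha> T (i, Suc r) * box_wt n \<alpha> T (i+1, Suc r)
      = pair_wt L (card W) (coinv_count W T) a b c d"
    unfolding a_def b_def c_def d_def W_def L_def using cols r by (rule box_wt_pair)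
  have wt_U: "box_wt n \<alpha> U (i, Suc r) * box_wt n \<alpha> U (i+1, Suc r)
      = pair_wt L (card W) (coinv_count W T) (U (i, r)) (U (i+1, r)) (U (i, Suc r)) (U (i+1, Suc r))"
    using box_wt_pair[OF cols r, of U] coinv_count_Omega_right_arm[OF cols(3)]
    unfolding U_def W_def L_def by simp
  have rho_T: "rho n \<alpha> i T r = rho_local (card W) L a b c d"
    unfolding a_def b_def c_def d_def W_def L_def using r by (rule rho_eq_rho_local)
  have rho_U: "rho n \<alpha> i U r = rho_local (card W) L (U (i, r)) (U (i+1, r)) (U (i, Suc r)) (U (i+1, Suc r))"
    unfolding W_def L_def using r by (rule rho_eq_rho_local)
  consider "r < h" | "r = h" | "h < r" by linarith
  then have "pair_wt L (card W) (coinv_count W T) a b c d * rho_factor n \<alpha> i h T r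
      = pair_wt L (card W) (coinv_count W T) (U (i, r)) (U (i+1, r)) (U (i, Suc r)) (U (i+1, Suc r))
        * rho_factor n \<alpha> i h U r"
  proof cases
    case 1
    then have "U (i, r) = b" "U (i+1, r) = a" "U (i, Suc r) = d" "U (i+1, Suc r) = c"
      unfolding U_def Omega_apply swap_cell_def a_def b_def c_def d_def by auto
    moreover have "b \<noteq> c" using \<open>U (i, r) \<noteq> U (i+1, Suc r)\<close> calculation by simp
    ultimately show ?thesis
      using 1 detailed_balance_swapped_row[OF \<open>finite W\<close> arm_values _ \<open>a \<noteq> b\<close> \<open>c \<noteq> d\<close> \<open>a \<noteq> d\<close>]
      unfolding rho_factor_def rho_T rho_U L_def by simp
  next
    case 2
    then have "U (i, r) = b" "U (i+1, r) = a" "U (i, Suc r) = c" "U (i+1, Suc r) = d"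
      unfolding U_def Omega_apply swap_cell_def a_def b_def c_def d_def by auto
    moreover have "b \<noteq> d" using \<open>U (i, r) \<noteq> U (i+1, Suc r)\<close> calculation by simp
    moreover have "rho_factor n \<alpha> i h S r = 1 - rho n \<alpha> i S r" for S
      using 2 unfolding rho_factor_def by simp
    ultimately show ?thesis
      using detailed_balance_top_row[OF \<open>finite W\<close> arm_values _ \<open>a \<noteq> b\<close> \<open>c \<noteq> d\<close> \<open>a \<noteq> d\<close>]
      by (simp add: rho_T rho_U L_def)
  next
    case 3
    then show ?thesis
      unfolding U_def Omega_apply swap_cell_def a_def b_def c_def d_def rho_factor_def by simp
  qed
  then show ?thesis unfolding wt_T wt_U[unfolded U_def] U_def .
qed

lemma detailed_balance_Omega:
  assumes cols: "1 \<le> i" "i+1 \<le> n" "\<alpha> i = \<alpha> (i+1)" and T: "T \<in> NAF n \<alpha> \<tau>"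
    and U: "Omega i h T \<in> NAF n \<alpha> \<tau>'" and h: "h \<le> \<alpha> i"
  shows "wt n \<alpha> T * ((\<Prod>r<h. rho n \<alpha> i T r) * (1 - rho n \<alpha> i T h))
    = wt n \<alpha> (Omega i h T) * ((\<Prod>r<h. rho n \<alpha> i (Omega i h T) r) * (1 - rho n \<alpha> i (Omega i h T) h))"
proof -
  define U where "U = Omega i h T"
  define outside where "outside = {u \<in> dg n \<alpha>. fst u \<notin> {i, i+1}}"
  have wt_rho: "wt n \<alpha> S * ((\<Prod>r<h. rho n \<alpha> i S r) * (1 - rho n \<alpha> i S h))
      = (\<Prod>u\<in>outside. box_wt n \<alpha> S u)
        * (\<Prod>r<\<alpha> i. box_wt n \<alpha> S (i, Suc r) * box_wt n \<alpha> S (i+1, Suc r) * rho_factor n \<alpha> i h S r)"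
    for S
    unfolding wt_split_columns[OF cols] prod_rho_factor[where \<alpha> = \<alpha> and i = i, OF h] outside_def
    by (simp add: prod.distrib mult.assoc)
  have "(\<Prod>u\<in>outside. box_wt n \<alpha> T u) = (\<Prod>u\<in>outside. box_wt n \<alpha> U u)"
    unfolding outside_def U_def using box_wt_Omega_outside[OF cols] by simp
  moreover have "(\<Prod>r<\<alpha> i. box_wt n \<alpha> T (i, Suc r) * box_wt n \<alpha> T (i+1, Suc r) * rho_factor n \<alpha> i h T r)
      = (\<Prod>r<\<alpha> i. box_wt n \<alpha> U (i, Suc r) * box_wt n \<alpha> U (i+1, Suc r) * rho_factor n \<alpha> i h U r)"
    unfolding U_def using detailed_balance_column_pair[OF cols T U] by simp
  ultimately show ?thesis unfolding wt_rho U_def by simp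
qed

section \<open>Total probability\<close>

lemma Omega_inj:
  assumes cols: "1 \<le> i" "i+1 \<le> n" "\<alpha> i = \<alpha> (i+1)" and T: "T \<in> NAF n \<alpha> \<tau>"
    and "h \<le> \<alpha> i" "h' \<le> \<alpha> i" "Omega i h T = Omega i h' T"
  shows "h = h'"
proof (rule ccontr)
  assume "h \<noteq> h'"
  define k where "k = max h h'"
  have "T (i, k) \<noteq> T (i+1, k)"
    using cols assms(5,6) unfolding k_def
    by (intro NAF_neq[OF T]) (auto intro!: cell_in_adg simp: attacks_def)
  moreover have "Omega i h T (i, k) = Omega i h' T (i, k)" using assms(7) by simp
  ultimately show False
    using \<open>h \<noteq> h'\<close> unfolding Omega_apply swap_cell_def k_def by (cases "h < h'") (simp_all add: max_def)
qed

lemma P_i_Omega: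
  assumes "1 \<le> i" "i+1 \<le> n" "\<alpha> i = \<alpha> (i+1)" "T \<in> NAF n \<alpha> \<tau>" "h \<le> \<alpha> i"
  shows "P_i n \<alpha> i T (Omega i h T) = (\<Prod>r<h. rho n \<alpha> i T r) * (1 - rho n \<alpha> i T h)"
proof -
  have "(THE h'. h' \<le> \<alpha> i \<and> Omega i h T = Omega i h' T) = h"
    using assms Omega_inj[OF assms(1-4)] by (intro the_equality) auto
  then show ?thesis unfolding P_i_def Let_def using assms(5) by auto
qed

lemma P_i_eq_0: "\<not> (\<exists>h\<le>\<alpha> i. U = Omega i h T) \<Longrightarrow> P_i n \<alpha> i T U = 0"
  unfolding P_i_def by (rule if_not_P)

lemma sum_prod_one_minus_telescope:
  fixes g :: "nat \<Rightarrow> 'a::comm_ring_1"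
  shows "(\<Sum>h\<le>k. (\<Prod>r<h. g r) * (1 - g h)) = 1 - (\<Prod>r<Suc k. g r)"
  using sum_telescope[of "\<lambda>h. \<Prod>r<h. g r" k] by (simp add: algebra_simps)

lemma finite_NAF: "finite (NAF n \<alpha> \<tau>)"
proof -
  have "fillings n \<alpha> \<tau> \<subseteq> (\<lambda>f u. if u \<in> adg n \<alpha> then f u else 0) ` (PiE (adg n \<alpha>) (\<lambda>_. {1..n}))"
  proof
    fix T assume T: "T \<in> fillings n \<alpha> \<tau>"
    then have "T = (\<lambda>u. if u \<in> adg n \<alpha> then restrict T (adg n \<alpha>) u else 0)"
      unfolding fillings_def by (auto simp: fun_eq_iff)
    moreover have "restrict T (adg n \<alpha>) \<in> PiE (adg n \<alpha>) (\<lambda>_. {1..n})"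
      using T unfolding fillings_def by auto
    ultimately show "T \<in> (\<lambda>f u. if u \<in> adg n \<alpha> then f u else 0) ` (PiE (adg n \<alpha>) (\<lambda>_. {1..n}))"
      by blast
  qed
  moreover have "finite (PiE (adg n \<alpha>) (\<lambda>_. {1..n::nat}))"
    using finite_adg by (intro finite_PiE) auto
  ultimately have "finite (fillings n \<alpha> \<tau>)" using finite_subset by blast
  then show ?thesis unfolding NAF_def by simp
qed

lemma Omega_in_fillings:
  assumes "1 \<le> i" "i+1 \<le> n" "\<alpha> i = \<alpha> (i+1)" and T: "T \<in> fillings n \<alpha> \<tau>"
  shows "Omega i h T \<in> fillings n \<alpha> (perm_si \<tau> i)"
proof -
  note adg_iff = swap_cell_in_adg_iff[OF assms(1-3), of h]
  have "T (swap_cell i h (j, 0)) = perm_si \<tau> i j" if "j \<in> {1..n}" for j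
    using T that assms(1,2) unfolding fillings_def swap_cell_def perm_si_def by auto
  moreover have "T (swap_cell i h u) = 0" if "u \<notin> adg n \<alpha>" for u
    using T adg_iff[of u] that unfolding fillings_def by blast
  moreover have "T (swap_cell i h u) \<in> {1..n}" if "u \<in> adg n \<alpha>" for u
    using T adg_iff[of u] that unfolding fillings_def by blast
  ultimately show ?thesis unfolding fillings_def Omega_apply by auto
qed

lemma attacks_swap_cell:
  assumes "attacks u v" "\<not> attacks (swap_cell i h u) (swap_cell i h v)"
  shows "\<exists>r\<le>h. (u = (i, r) \<and> v = (i+1, Suc r)) \<or> (v = (i, r) \<and> u = (i+1, Suc r))"
  using assms by (cases u; cases v) (auto simp: attacks_def swap_cell_def split: if_splits)

lemma Omega_in_NAF:
  assumes cols: "1 \<le> i" "i+1 \<le> n" "\<alpha> i = \<alpha> (i+1)" and T: "T \<in> NAF n \<alpha> \<tau>"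
    and below: "\<forall>r<h. T (i+1, r) \<noteq> T (i, Suc r)"
    and top: "h < \<alpha> i \<Longrightarrow> T (i+1, h) \<noteq> T (i+1, Suc h)"
  shows "Omega i h T \<in> NAF n \<alpha> (perm_si \<tau> i)"
proof -
  have "Omega i h T u \<noteq> Omega i h T v"
    if u: "u \<in> adg n \<alpha>" and v: "v \<in> adg n \<alpha>" and "attacks u v" for u v
  proof (cases "attacks (swap_cell i h u) (swap_cell i h v)")
    case True
    then show ?thesis
      unfolding Omega_apply using NAF_neq[OF T] swap_cell_in_adg_iff[OF cols] u v by blast
  next
    case False
    then obtain r where "r \<le> h"
      and uv: "(u = (i, r) \<and> v = (i+1, Suc r)) \<or> (v = (i, r) \<and> u = (i+1, Suc r))"
      using attacks_swap_cell \<open>attacks u v\<close> by blast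
    show ?thesis
    proof (cases "r < h")
      case True
      then show ?thesis using uv below unfolding Omega_apply swap_cell_def by auto
    next
      case False
      then have "r = h" "h < \<alpha> i" using \<open>r \<le> h\<close> uv u v cols(3) unfolding adg_def dg_def by auto
      then show ?thesis using uv top unfolding Omega_apply swap_cell_def by auto
    qed
  qed
  then show ?thesis
    using Omega_in_fillings[OF cols] T unfolding NAF_def by auto
qed

lemma rho_eq_0_if_diagonal_repeat:
  assumes "1 \<le> i" "i+1 \<le> n" "\<alpha> i = \<alpha> (i+1)" "T \<in> NAF n \<alpha> \<tau>" "r < \<alpha> i"
    and "T (i+1, r) = T (i, Suc r)"
  shows "rho n \<alpha> i T r = 0"
  using assms(6) rho_local_b_eq_c[OF NAF_column_pair_neq[OF assms(1-5)]]
  unfolding rho_eq_rho_local[where \<alpha> = \<alpha> and i = i, OF assms(5)] by simp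

lemma rho_eq_1_if_right_column_repeat:
  assumes "1 \<le> i" "i+1 \<le> n" "\<alpha> i = \<alpha> (i+1)" "T \<in> NAF n \<alpha> \<tau>" "r < \<alpha> i"
    and "T (i+1, r) = T (i+1, Suc r)"
  shows "rho n \<alpha> i T r = 1"
  using assms(6) rho_local_b_eq_d[OF NAF_column_pair_neq[OF assms(1-5)]]
  unfolding rho_eq_rho_local[where \<alpha> = \<alpha> and i = i, OF assms(5)] by simp

lemma sum_P_i_eq_1:
  assumes cols: "1 \<le> i" "i+1 \<le> n" "\<alpha> i = \<alpha> (i+1)" and T: "T \<in> NAF n \<alpha> \<tau>"
  shows "(\<Sum>U\<in>NAF n \<alpha> (perm_si \<tau> i). P_i n \<alpha> i T U) = 1"
proof -
  define S where "S = NAF n \<alpha> (perm_si \<tau> i)"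
  define G where "G = (\<lambda>h. Omega i h T) ` {..\<alpha> i}"
  define p where "p h = (\<Prod>r<h. rho n \<alpha> i T r) * (1 - rho n \<alpha> i T h)" for h
  have P_i_G: "P_i n \<alpha> i T (Omega i h T) = p h" if "h \<le> \<alpha> i" for h
    unfolding p_def using P_i_Omega[OF cols T that] .
  have outside_G: "P_i n \<alpha> i T U = 0" if "U \<notin> G" for U
    using that unfolding G_def by (intro P_i_eq_0) auto
  have outside_S: "P_i n \<alpha> i T U = 0" if "U \<in> G" "U \<notin> S" for U
  proof (rule ccontr)
    assume "P_i n \<alpha> i T U \<noteq> 0"
    obtain h where h: "h \<le> \<alpha> i" "U = Omega i h T" using \<open>U \<in> G\<close> unfolding G_def by auto
    then have "p h \<noteq> 0" using P_i_G \<open>P_i n \<alpha> i T U \<noteq> 0\<close> by simp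
    then have "\<forall>r<h. rho n \<alpha> i T r \<noteq> 0" "rho n \<alpha> i T h \<noteq> 1" unfolding p_def by auto
    then have "U \<in> S"
      unfolding S_def h(2)
      using h(1) rho_eq_0_if_diagonal_repeat[OF cols T] rho_eq_1_if_right_column_repeat[OF cols T]
      by (intro Omega_in_NAF[OF cols T]) auto
    then show False using \<open>U \<notin> S\<close> by contradiction
  qed
  have "(\<Sum>U\<in>S. P_i n \<alpha> i T U) = (\<Sum>U\<in>G. P_i n \<alpha> i T U)"
    using finite_NAF outside_G outside_S unfolding S_def G_def by (intro sum.mono_neutral_cong) auto
  also have "\<dots> = (\<Sum>h\<le>\<alpha> i. p h)"
    unfolding G_def using Omega_inj[OF cols T] P_i_G by (subst sum.reindex) (auto simp: inj_on_def)
  also have "\<dots> = 1" unfolding p_def sum_prod_one_minus_telescope by (simp add: rho_top)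
  finally show ?thesis unfolding S_def .
qed

lemma wt_mult_P_i_symmetric:
  assumes cols: "1 \<le> i" "i+1 \<le> n" "\<alpha> i = \<alpha> (i+1)"
    and T: "T \<in> NAF n \<alpha> \<tau>" and U: "U \<in> NAF n \<alpha> \<tau>'"
  shows "wt n \<alpha> T * P_i n \<alpha> i T U = wt n \<alpha> U * P_i n \<alpha> i U T"
proof (cases "\<exists>h\<le>\<alpha> i. U = Omega i h T")
  case True
  then obtain h where h: "h \<le> \<alpha> i" "U = Omega i h T" by blast
  then have "T = Omega i h U" by simp
  then show ?thesis
    using detailed_balance_Omega[OF cols T _ h(1)] U P_i_Omega[OF cols T h(1)] P_i_Omega[OF cols U h(1)]
    unfolding h(2) by simp
next
  case False
  then have "\<not> (\<exists>h\<le>\<alpha> i. T = Omega i h U)" by auto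
  then show ?thesis using False by (simp add: P_i_eq_0)
qed

lemma perm_si_perm_si [simp]: "perm_si (perm_si \<sigma> i) i = \<sigma>"
  unfolding perm_si_def by (auto simp: fun_eq_iff)

theorem theorem3p8:
  fixes n i :: nat and \<alpha> \<sigma> :: "nat \<Rightarrow> nat"
  assumes "\<sigma> permutes {1..n}"
    and "1 \<le> i" and "i \<le> n - 1"
    and "\<alpha> i = \<alpha> (i+1)"
  shows "prob_bij (NAF n \<alpha> \<sigma>) (NAF n \<alpha> (perm_si \<sigma> i))
           (wt n \<alpha>) (wt n \<alpha>) (P_i n \<alpha> i) (P_i n \<alpha> i)"
proof -
  have cols: "1 \<le> i" "i+1 \<le> n" "\<alpha> i = \<alpha> (i+1)" using assms(2-4) by auto
  show ?thesis
    unfolding prob_bij_def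
  proof (intro conjI ballI)
    fix T assume "T \<in> NAF n \<alpha> \<sigma>"
    then show "(\<Sum>U\<in>NAF n \<alpha> (perm_si \<sigma> i). P_i n \<alpha> i T U) = 1" by (rule sum_P_i_eq_1[OF cols])
  next
    fix U assume "U \<in> NAF n \<alpha> (perm_si \<sigma> i)"
    then show "(\<Sum>T\<in>NAF n \<alpha> \<sigma>. P_i n \<alpha> i U T) = 1" using sum_P_i_eq_1[OF cols] by fastforce
  next
    fix T U assume "T \<in> NAF n \<alpha> \<sigma>" "U \<in> NAF n \<alpha> (perm_si \<sigma> i)"
    then show "wt n \<alpha> T * P_i n \<alpha> i T U = wt n \<alpha> U * P_i n \<alpha> i U T"
      by (rule wt_mult_P_i_symmetric[OF cols])
  qed
qed

end
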